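(* Let $L$ be a post-Lie-Rinehart algebra over $R$, with anchor map $\rho$ and connection $\rhd$. Let $Z\in L$ and $X,Y_1,\dots,Y_n\in L$. Then \[ \bigl(Y_1\rhd(Y_2\rhd(\cdots(Y_n\rhd\delta X)\cdots))\bigr)(Z)=(Y_1\ast\cdots\ast Y_n)Z\rhd X, \] where $(Y_1\ast\cdots\ast Y_n)Z\in U(L)$ is a product in $U(L)$, the right-hand $\rhd$ is the Guin--Oudom extension $U(L)\otimes L\to L$, and $\ast$ is the Grossman--Larson product.
   Context: Let $R$ be a commutative unital algebra. A Lie-Rinehart algebra over $R$ is an $R$-module $L$ with a Lie bracket $\llbracket\cdot,\cdot\rrbracket$ and an $R$-linear Lie morphism $\rho:L\to\mathrm{Der}(R)$ with $\llbracket X,fY\rrbracket=(\rho(X)f)Y+f\llbracket X,Y\rrbracket$. A connection is a map $(X,Y)\mapsto X\rhd Y$, $R$-linear in $X$, with $X\rhd(fY)=(\rho(X)f)Y+fX\rhd Y$. Its torsion is $T(X,Y)=X\rhd Y-Y\rhd X-\llbracket X,Y\rrbracket$ and its curvature is $\mathcal{R}(X,Y,Z)=X\rhd(Y\rhd Z)-Y\rhd(X\rhd Z)-\llbracket X,Y\rrbracket\rhd Z$. A post-Lie-Rinehart algebra is a Lie-Rinehart algebra with a connection that is flat ($\mathcal{R}=0$) and has constant torsion ($X\rhd T(Y,Z)=T(X\rhd Y,Z)+T(Y,X\rhd Z)$). With $[X,Y]:=-T(X,Y)$, $(L,[\cdot,\cdot],\rhd)$ is a post-Lie algebra. The connection extends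 to $\mathrm{Hom}_R(L)$ by $(X\rhd u)(Y)=X\rhd u(Y)-u(X\rhd Y)$, and $\delta X(Z):=Z\rhd X$. $U(L)$ is the universal enveloping algebra of the Lie algebra $(L,[\cdot,\cdot])$ over the ground field. It is a Hopf algebra with concatenation product and the coproduct $\Delta(A)=A_{(1)}\otimes A_{(2)}$ (Sweedler notation) determined by $\Delta(x)=x\otimes1+1\otimes x$ for $x\in L$ and being an algebra morphism. The Guin--Oudom extension of $\rhd$ to $U(L)\otimes U(L)\to U(L)$ is the unique extension satisfying, for $A,B,C\in U(L)$ and $x\in L$: \[ 1\rhd A=A,\qquad xA\rhd B=x\rhd(A\rhd B)-(x\rhd A)\rhd B,\qquad A\rhd BC=(A_{(1)}\rhd B)(A_{(2)}\rhd C). \] In particular, for $y\in L$, \[ x_1\cdots x_k\rhd y=x_1\rhd(x_2\cdots x_k\rhd y)-\sum_{i=2}^k x_2\cdots x_{i-1}(x_1\rhd x_i)x_{i+1}\cdots x_k\rhd y. \] The Grossman--Larson product is $A\ast B=A_{(1)}(A_{(2)}\rhd B)$. *)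

theory Defs
  imports Main
begin

text \<open>
  The k-vector space
  structure of L is c.x = sm (iota c) x.
\<close>

definition k_algebra :: "('k::field \<Rightarrow> 'r::comm_ring_1) \<Rightarrow> bool" where
  "k_algebra \<iota> \<longleftrightarrow> (\<forall>a b. \<iota> (a + b) = \<iota> a + \<iota> b) \<and> (\<forall>a b. \<iota> (a * b) = \<iota> a * \<iota> b) \<and> \<iota> 1 = 1"

definition is_module :: "('r::comm_ring_1 \<Rightarrow> 'l::ab_group_add \<Rightarrow> 'l) \<Rightarrow> bool" where
  "is_module sm \<longleftrightarrow>
     (\<forall>a b x. sm (a + b) x = sm a x + sm b x) \<and> (\<forall>a x y. sm a (x + y) = sm a x + sm a y) \<and>
     (\<forall>a b x. sm (a * b) x = sm a (sm b x)) \<and> (\<forall>x. sm 1 x = x)"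

definition Der :: "('k::field \<Rightarrow> 'r::comm_ring_1) \<Rightarrow> ('r \<Rightarrow> 'r) set" where
  "Der \<iota> = {D. (\<forall>a b. D (a + b) = D a + D b) \<and> (\<forall>c a. D (\<iota> c * a) = \<iota> c * D a) \<and>
               (\<forall>a b. D (a * b) = a * D b + D a * b)}"

definition Lie_Rinehart ::
  "('k::field \<Rightarrow> 'r::comm_ring_1) \<Rightarrow> ('r \<Rightarrow> 'l::ab_group_add \<Rightarrow> 'l) \<Rightarrow> ('l \<Rightarrow> 'l \<Rightarrow> 'l) \<Rightarrow> ('l \<Rightarrow> 'r \<Rightarrow> 'r) \<Rightarrow> bool" where
  "Lie_Rinehart \<iota> sm br \<rho> \<longleftrightarrow>
     k_algebra \<iota> \<and> is_module sm \<and>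
     \<comment> \<open>k-bilinear Lie bracket\<close>
     (\<forall>x y z. br (x + y) z = br x z + br y z) \<and> (\<forall>x y z. br x (y + z) = br x y + br x z) \<and>
     (\<forall>c x y. br (sm (\<iota> c) x) y = sm (\<iota> c) (br x y)) \<and>
     (\<forall>c x y. br x (sm (\<iota> c) y) = sm (\<iota> c) (br x y)) \<and>
     (\<forall>x. br x x = 0) \<and>
     (\<forall>x y z. br x (br y z) + br y (br z x) + br z (br x y) = 0) \<and>
     \<comment> \<open>anchor: R-linear Lie morphism into Der(R)\<close>
     (\<forall>X. \<rho> X \<in> Der \<iota>) \<and>
     (\<forall>X Y. \<rho> (X + Y) = (\<lambda>a. \<rho> X a + \<rho> Y a)) \<and>
     (\<forall>f X. \<rho> (sm f X) = (\<lambda>a. f * \<rho> X a)) \<and>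
     (\<forall>X Y. \<rho> (br X Y) = (\<lambda>a. \<rho> X (\<rho> Y a) - \<rho> Y (\<rho> X a))) \<and>
     \<comment> \<open>Leibniz rule\<close>
     (\<forall>X f Y. br X (sm f Y) = sm (\<rho> X f) Y + sm f (br X Y))"

definition is_connection ::
  "('r::comm_ring_1 \<Rightarrow> 'l::ab_group_add \<Rightarrow> 'l) \<Rightarrow> ('l \<Rightarrow> 'r \<Rightarrow> 'r) \<Rightarrow> ('l \<Rightarrow> 'l \<Rightarrow> 'l) \<Rightarrow> bool" where
  "is_connection sm \<rho> conn \<longleftrightarrow>
     (\<forall>X X' Y. conn (X + X') Y = conn X Y + conn X' Y) \<and>
     (\<forall>f X Y. conn (sm f X) Y = sm f (conn X Y)) \<and>
     (\<forall>X Y Y'. conn X (Y + Y') = conn X Y + conn X Y') \<and>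
     (\<forall>X f Y. conn X (sm f Y) = sm (\<rho> X f) Y + sm f (conn X Y))"

definition torsion :: "('l::ab_group_add \<Rightarrow> 'l \<Rightarrow> 'l) \<Rightarrow> ('l \<Rightarrow> 'l \<Rightarrow> 'l) \<Rightarrow> 'l \<Rightarrow> 'l \<Rightarrow> 'l" where
  "torsion br conn X Y = conn X Y - conn Y X - br X Y"

definition curvature :: "('l::ab_group_add \<Rightarrow> 'l \<Rightarrow> 'l) \<Rightarrow> ('l \<Rightarrow> 'l \<Rightarrow> 'l) \<Rightarrow> 'l \<Rightarrow> 'l \<Rightarrow> 'l \<Rightarrow> 'l" where
  "curvature br conn X Y Z = conn X (conn Y Z) - conn Y (conn X Z) - conn (br X Y) Z"

definition post_Lie_Rinehart ::
  "('k::field \<Rightarrow> 'r::comm_ring_1) \<Rightarrow> ('r \<Rightarrow> 'l::ab_group_add \<Rightarrow> 'l) \<Rightarrow> ('l \<Rightarrow> 'l \<Rightarrow> 'l) \<Rightarrow> ('l \<Rightarrow> 'r \<Rightarrow> 'r)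
    \<Rightarrow> ('l \<Rightarrow> 'l \<Rightarrow> 'l) \<Rightarrow> bool" where
  "post_Lie_Rinehart \<iota> sm br \<rho> conn \<longleftrightarrow>
     Lie_Rinehart \<iota> sm br \<rho> \<and> is_connection sm \<rho> conn \<and>
     (\<forall>X Y Z. curvature br conn X Y Z = 0) \<and>
     (\<forall>X Y Z. conn X (torsion br conn Y Z) = torsion br conn (conn X Y) Z + torsion br conn Y (conn X Z))"

definition hom_act :: "('l::ab_group_add \<Rightarrow> 'l \<Rightarrow> 'l) \<Rightarrow> 'l \<Rightarrow> ('l \<Rightarrow> 'l) \<Rightarrow> ('l \<Rightarrow> 'l)" where
  "hom_act conn X u = (\<lambda>Y. conn X (u Y) - u (conn X Y))"

definition delta :: "('l \<Rightarrow> 'l \<Rightarrow> 'l) \<Rightarrow> 'l \<Rightarrow> ('l \<Rightarrow> 'l)" where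
  "delta conn X = (\<lambda>Z. conn Z X)"

text \<open>Guin--Oudom extension on words x1...xk acting on a letter y
  (recursion formula from the paper).\<close>
function go_act :: "('l::ab_group_add \<Rightarrow> 'l \<Rightarrow> 'l) \<Rightarrow> 'l list \<Rightarrow> 'l \<Rightarrow> 'l" where
  "go_act c [] y = y"
| "go_act c (x # A) y =
     c x (go_act c A y) - sum_list (map (\<lambda>i. go_act c (A[i := c x (A ! i)]) y) [0..<length A])"
  by pat_completeness auto
termination by (relation "measure (\<lambda>(c, A, y). length A)") auto

text \<open>Elements of U(L) are represented by formal sums of words (lists of words, all
  coefficients of the relevant elements being 1).  Word acting on word:
  A |> b1...bm = sum over maps f from the letters of A to {1..m} of
  (A_f1 |> b1)...(A_fm |> bm) (iterated rule A |> BC = (A1 |> B)(A2 |> C)).\<close>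
definition go_word :: "('l::ab_group_add \<Rightarrow> 'l \<Rightarrow> 'l) \<Rightarrow> 'l list \<Rightarrow> 'l list \<Rightarrow> 'l list list" where
  "go_word c A B =
     map (\<lambda>f. map (\<lambda>j. go_act c (nths A {i. f ! i = j}) (B ! j)) [0..<length B])
         (List.n_lists (length A) [0..<length B])"

text \<open>Grossman--Larson product of words: A * B = A(1) (A(2) |> B) with the
  shuffle (deconcatenation by subsets) coproduct.\<close>
definition gl_word :: "('l::ab_group_add \<Rightarrow> 'l \<Rightarrow> 'l) \<Rightarrow> 'l list \<Rightarrow> 'l list \<Rightarrow> 'l list list" where
  "gl_word c A B =
     concat (map (\<lambda>m. map (\<lambda>w. nths A {i. m ! i} @ w) (go_word c (nths A {i. \<not> m ! i}) B))
                 (List.n_lists (length A) [True, False]))"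

definition gl :: "('l::ab_group_add \<Rightarrow> 'l \<Rightarrow> 'l) \<Rightarrow> 'l list list \<Rightarrow> 'l list list \<Rightarrow> 'l list list" where
  "gl c As Bs = concat (map (\<lambda>a. concat (map (\<lambda>b. gl_word c a b) Bs)) As)"

definition gl_prod :: "('l::ab_group_add \<Rightarrow> 'l \<Rightarrow> 'l) \<Rightarrow> 'l list \<Rightarrow> 'l list list" where
  "gl_prod c Ys = foldr (\<lambda>y acc. gl c [[y]] acc) Ys [[]]"

definition go_eval :: "('l::ab_group_add \<Rightarrow> 'l \<Rightarrow> 'l) \<Rightarrow> 'l list list \<Rightarrow> 'l \<Rightarrow> 'l" where
  "go_eval c As y = sum_list (map (\<lambda>w. go_act c w y) As)"

end

theory Submission
  imports Defs
begin

text \<open>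
  Both sides obey the same recursion in the first letter Y of the word.
  On the right, the Grossman--Larson product with a letter is the Leibniz rule
  \<open>Y \<ast> b\<^sub>1\<cdots>b\<^sub>m = Y b\<^sub>1\<cdots>b\<^sub>m + \<Sum>\<^sub>j b\<^sub>1\<cdots>(Y \<rhd> b\<^sub>j)\<cdots>b\<^sub>m\<close>, and the Guin--Oudom recursion for
  \<open>Y b\<^sub>1\<cdots>b\<^sub>m Z \<rhd> X\<close> cancels all these terms except \<open>Y \<rhd> (b\<^sub>1\<cdots>b\<^sub>m Z \<rhd> X)\<close> and
  \<open>b\<^sub>1\<cdots>b\<^sub>m (Y \<rhd> Z) \<rhd> X\<close>.  Induction on the number of letters then only needs
  additivity of \<open>Y \<rhd> \<cdot>\<close>.
\<close>

lemma go_word_Nil: "go_word c [] b = [b]"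
  unfolding go_word_def by (simp add: map_nth)

lemma go_word_singleton:
  "go_word c [Y] b = map (\<lambda>k. b[k := c Y (b ! k)]) [0..<length b]"
proof -
  have n_lists_singleton:
    "List.n_lists 1 [0..<length b] = map (\<lambda>k. [k]) [0..<length b]"
    by (simp add: map_concat)
  have "map (\<lambda>j. go_act c (nths [Y] {i. [k] ! i = j}) (b ! j)) [0..<length b]
          = b[k := c Y (b ! k)]" if "k < length b" for k
    using that by (intro nth_equalityI) (auto simp: nths_singleton nth_list_update)
  then show ?thesis
    unfolding go_word_def by (simp add: n_lists_singleton)
qed

lemma gl_word_singleton:
  "gl_word c [Y] b = (Y # b) # map (\<lambda>j. b[j := c Y (b ! j)]) [0..<length b]"
  unfolding gl_word_def by (simp add: nths_singleton go_word_Nil go_word_singleton)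

lemma go_act_Cons_snoc:
  "go_act c (Y # w @ [Z]) X
     = c Y (go_act c (w @ [Z]) X)
       - (sum_list (map (\<lambda>i. go_act c (w[i := c Y (w ! i)] @ [Z]) X) [0..<length w])
          + go_act c (w @ [c Y Z]) X)"
proof -
  have "map (\<lambda>i. go_act c ((w @ [Z])[i := c Y ((w @ [Z]) ! i)]) X) [0..<length w]
      = map (\<lambda>i. go_act c (w[i := c Y (w ! i)] @ [Z]) X) [0..<length w]"
    by (rule map_cong) (auto simp: list_update_append1 nth_append)
  then show ?thesis
    by (simp only: go_act.simps(2) length_append_singleton upt_Suc_append[OF le0]
        map_append sum_list_append) simp
qed

lemma sum_list_map_additive:
  fixes f :: "'a::monoid_add \<Rightarrow> 'b::ab_group_add"
  assumes "\<And>a b. f (a + b) = f a + f b"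
  shows "f (sum_list xs) = sum_list (map f xs)"
proof -
  have "f 0 = 0"
    using assms[of 0 0] by (simp only: add_0 add_cancel_right_right)
  then show ?thesis
    by (induction xs) (simp_all add: assms)
qed

lemma go_eval_gl_singleton:
  assumes additive: "\<And>a b. c Y (a + b) = c Y a + c Y b"
  shows "go_eval c (map (\<lambda>w. w @ [Z]) (gl c [[Y]] Ws)) X
           = c Y (go_eval c (map (\<lambda>w. w @ [Z]) Ws) X)
             - go_eval c (map (\<lambda>w. w @ [c Y Z]) Ws) X"
proof -
  have word: "go_eval c (map (\<lambda>w. w @ [Z]) (gl_word c [Y] w)) X
                = c Y (go_act c (w @ [Z]) X) - go_act c (w @ [c Y Z]) X" for w
    by (simp add: go_eval_def gl_word_singleton go_act_Cons_snoc o_def del: go_act.simps)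
  have "go_eval c (map (\<lambda>w. w @ [Z]) (gl c [[Y]] Ws)) X
          = (\<Sum>w\<leftarrow>Ws. c Y (go_act c (w @ [Z]) X) - go_act c (w @ [c Y Z]) X)"
    by (induction Ws) (simp_all add: gl_def go_eval_def flip: word)
  also have "\<dots> = c Y (go_eval c (map (\<lambda>w. w @ [Z]) Ws) X)
                    - go_eval c (map (\<lambda>w. w @ [c Y Z]) Ws) X"
    by (simp add: go_eval_def sum_list_subtractf sum_list_map_additive[OF additive] o_def)
  finally show ?thesis .
qed

lemma hom_act_delta_eq_go_eval_gl_prod:
  assumes additive: "\<And>Y a b. c Y (a + b) = c Y a + c Y b"
  shows "foldr (hom_act c) Ys (delta c X) Z
           = go_eval c (map (\<lambda>w. w @ [Z]) (gl_prod c Ys)) X"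
proof (induction Ys arbitrary: Z)
  case Nil
  show ?case
    by (simp add: gl_prod_def go_eval_def delta_def)
next
  case (Cons Y Ys)
  then show ?case
    by (simp add: hom_act_def gl_prod_def go_eval_gl_singleton[OF additive])
qed

theorem mainTheorem7:
  fixes \<iota> :: "'k::field \<Rightarrow> 'r::comm_ring_1"
    and sm :: "'r \<Rightarrow> 'l::ab_group_add \<Rightarrow> 'l"
    and br :: "'l \<Rightarrow> 'l \<Rightarrow> 'l"
    and \<rho> :: "'l \<Rightarrow> 'r \<Rightarrow> 'r"
    and conn :: "'l \<Rightarrow> 'l \<Rightarrow> 'l"
    and Ys :: "'l list" and X Z :: 'l
  assumes "post_Lie_Rinehart \<iota> sm br \<rho> conn"
    and "Ys \<noteq> []"
  shows "foldr (hom_act conn) Ys (delta conn X) Z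
           = go_eval conn (map (\<lambda>w. w @ [Z]) (gl_prod conn Ys)) X"
proof -
  have "\<And>Y a b. conn Y (a + b) = conn Y a + conn Y b"
    using assms(1) unfolding post_Lie_Rinehart_def is_connection_def by blast
  then show ?thesis
    by (rule hom_act_delta_eq_go_eval_gl_prod)
qed

end
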